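(* The sequence $0\to M\to\mathbb{Z}(Q)\xrightarrow{\pi_1}\operatorname{Wt}(Q)\to0$ is exact, where $\pi_2$ restricts to an isomorphism from $\ker(\pi_1)$ onto the image of $M$ in $\mathbb{Z}^d$, and there is a commutative diagram of abelian groups \[ \begin{array}{ccccccccc}0&\to&M&\to&\mathbb{Z}(Q)&\xrightarrow{\pi_1}&\operatorname{Wt}(Q)&\to&0\\ &&\|&&\downarrow{\scriptstyle\pi_2}&&\downarrow{\scriptstyle\nu}&&\\ 0&\to&M&\to&\mathbb{Z}^d&\xrightarrow{\deg}&\operatorname{Cl}(X)&\to&0\end{array} \] with exact rows. Moreover $\pi_2$ identifies the subsemigroup $\mathbb{N}(Q)\cap\ker(\pi_1)$ with $\sigma^\vee\cap M=\mathbb{N}^d\cap\ker(\deg)$. In particular, the rank of $\mathbb{Z}(Q)$ is $n+r$.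
   Context: Let $\mathbb{k}$ be an algebraically closed field and $X=\operatorname{Spec}R$ a normal affine toric variety of dimension $n$ with a torus-fixed point, $R=\mathbb{k}[\sigma^\vee\cap M]$, $\sigma\subset N\otimes\mathbb{R}$ strongly convex rational polyhedral, $N=M^\vee$. Let $\sigma(1)$ be the rays, $d=|\sigma(1)|$, $v_\rho$ primitive generators, $D_\rho$ toric prime divisors, torus-invariant divisors identified with $\mathbb{Z}^d$; exact sequence $0\to M\to\mathbb{Z}^d\xrightarrow{\deg}\operatorname{Cl}(X)\to0$, $u\mapsto\sum_\rho\langle u,v_\rho\rangle D_\rho$, $\deg D=[\mathcal{O}_X(D)]$. Cox ring $\mathbb{k}[x_\rho]$. Let $\mathscr{E}=(E_0=\mathcal{O}_X,E_1,\dots,E_r)$ be pairwise distinct rank one reflexive sheaves, $E_i=\mathcal{O}_X(D_i')$, and $Q$ its quiver of sections: vertices $0,\dots,r$; an arrow $a:i\to j$ with label $\operatorname{div}(a)\in\mathbb{N}^d$ for each irreducible $T_M$-invariant section $x^{\operatorname{div}(a)}$ of $\operatorname{Hom}(E_i,E_j)\cong H^0(\mathcal{O}_X(D_j'-D_i'))$ (irreducible: not in the image of multiplication through any $E_k$, $k\neq i,j$). $\operatorname{Wt}(Q)=\{\theta\in\mathbb{Z}^{Q_0}:\sum\theta_i=0\}$; $\pi:\mathbb{Z}^{Q_1}\to\operatorname{Wt}(Q)\oplus\mathbb{Z}^d$, $\chi_a\mapsto(\chi_{\mathsf{h}(a)}-\chi_{\mathsf{t}(a)},\operatorname{div}(a))$;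 $\mathbb{Z}(Q)=\pi(\mathbb{Z}^{Q_1})$, $\mathbb{N}(Q)=\pi(\mathbb{N}^{Q_1})$; $\pi_1,\pi_2$ the projections of $\mathbb{Z}(Q)$ to $\operatorname{Wt}(Q)$ and $\mathbb{Z}^d$; $\nu:\operatorname{Wt}(Q)\to\operatorname{Cl}(X)$, $\nu(\sum\theta_i\chi_i)=\sum\theta_i[E_i]$. *)

theory Defs
  imports Complex_Main "HOL-Library.Function_Algebras" "HOL-Library.Product_Plus"
begin

text \<open>Lattices: N = M = ('n => int) for a finite index type 'n (so n = CARD('n));
  rays indexed by a finite type 'r (so d = CARD('r)), v :: 'r => 'n => int.
  Vertices of the quiver are the naturals 0..r.\<close>

definition pairing :: "('n::finite \<Rightarrow> int) \<Rightarrow> ('n \<Rightarrow> int) \<Rightarrow> int" where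
  "pairing u w = (\<Sum>i\<in>UNIV. u i * w i)"

definition primitive :: "('n::finite \<Rightarrow> int) \<Rightarrow> bool" where
  "primitive w \<longleftrightarrow> (\<forall>k::int. (\<forall>i. k dvd w i) \<longrightarrow> k dvd 1)"

definition cone_of :: "('r::finite \<Rightarrow> 'n::finite \<Rightarrow> int) \<Rightarrow> 'r set \<Rightarrow> ('n \<Rightarrow> real) set" where
  "cone_of v A = {x. \<exists>c::'r \<Rightarrow> real. (\<forall>\<rho>. 0 \<le> c \<rho>) \<and>
                      x = (\<lambda>i. \<Sum>\<rho>\<in>A. c \<rho> * real_of_int (v \<rho> i))}"

definition sigma :: "('r::finite \<Rightarrow> 'n::finite \<Rightarrow> int) \<Rightarrow> ('n \<Rightarrow> real) set" where
  "sigma v = cone_of v UNIV"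

definition dual_cone_M :: "('r::finite \<Rightarrow> 'n::finite \<Rightarrow> int) \<Rightarrow> ('n \<Rightarrow> int) set" where
  "dual_cone_M v = {u. \<forall>x\<in>sigma v. 0 \<le> (\<Sum>i\<in>UNIV. real_of_int (u i) * x i)}"

definition divmap :: "('r::finite \<Rightarrow> 'n::finite \<Rightarrow> int) \<Rightarrow> ('n \<Rightarrow> int) \<Rightarrow> ('r \<Rightarrow> int)" where
  "divmap v u = (\<lambda>\<rho>. pairing u (v \<rho>))"

text \<open>Cl(X) = Z^d / M, a class being represented as the coset D + image(M).\<close>
definition deg :: "('r::finite \<Rightarrow> 'n::finite \<Rightarrow> int) \<Rightarrow> ('r \<Rightarrow> int) \<Rightarrow> ('r \<Rightarrow> int) set" where
  "deg v D = range (\<lambda>u. D + divmap v u)"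

definition Cl :: "('r::finite \<Rightarrow> 'n::finite \<Rightarrow> int) \<Rightarrow> ('r \<Rightarrow> int) set set" where
  "Cl v = range (deg v)"

text \<open>Labels of T_M-invariant sections of Hom(E_i,E_j) = H^0(O_X(D_j' - D_i')):
  effective divisors D with deg D = [E_j] - [E_i].\<close>
definition sec :: "('r::finite \<Rightarrow> 'n::finite \<Rightarrow> int) \<Rightarrow> (nat \<Rightarrow> 'r \<Rightarrow> int)
                    \<Rightarrow> nat \<Rightarrow> nat \<Rightarrow> ('r \<Rightarrow> int) \<Rightarrow> bool" where
  "sec v Dp i j D \<longleftrightarrow> (\<forall>\<rho>. 0 \<le> D \<rho>) \<and> deg v D = deg v (Dp j - Dp i)"

definition irred :: "('r::finite \<Rightarrow> 'n::finite \<Rightarrow> int) \<Rightarrow> nat \<Rightarrow> (nat \<Rightarrow> 'r \<Rightarrow> int)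
                    \<Rightarrow> nat \<Rightarrow> nat \<Rightarrow> ('r \<Rightarrow> int) \<Rightarrow> bool" where
  "irred v r Dp i j D \<longleftrightarrow> sec v Dp i j D \<and>
     \<not> (\<exists>k\<le>r. k \<noteq> i \<and> k \<noteq> j \<and>
          (\<exists>D1 D2. sec v Dp i k D1 \<and> sec v Dp k j D2 \<and> D = D1 + D2))"

text \<open>Arrows of the quiver of sections, identified with (tail, head, label).\<close>
definition arrows :: "('r::finite \<Rightarrow> 'n::finite \<Rightarrow> int) \<Rightarrow> nat \<Rightarrow> (nat \<Rightarrow> 'r \<Rightarrow> int)
                    \<Rightarrow> (nat \<times> nat \<times> ('r \<Rightarrow> int)) set" where
  "arrows v r Dp = {(i, j, D). i \<le> r \<and> j \<le> r \<and> irred v r Dp i j D}"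

definition chi :: "nat \<Rightarrow> nat \<Rightarrow> int" where
  "chi i = (\<lambda>k. if k = i then 1 else 0)"

definition piQ :: "nat \<times> nat \<times> ('r \<Rightarrow> int) \<Rightarrow> (nat \<Rightarrow> int) \<times> ('r \<Rightarrow> int)" where
  "piQ a = (case a of (i, j, D) \<Rightarrow> (chi j - chi i, D))"

inductive_set zspan :: "'a::ab_group_add set \<Rightarrow> 'a set" for S where
  zspan_zero: "0 \<in> zspan S"
| zspan_gen: "x \<in> S \<Longrightarrow> x \<in> zspan S"
| zspan_add: "x \<in> zspan S \<Longrightarrow> y \<in> zspan S \<Longrightarrow> x + y \<in> zspan S"
| zspan_neg: "x \<in> zspan S \<Longrightarrow> - x \<in> zspan S"

inductive_set nspan :: "'a::comm_monoid_add set \<Rightarrow> 'a set" for S where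
  nspan_zero: "0 \<in> nspan S"
| nspan_gen: "x \<in> S \<Longrightarrow> x \<in> nspan S"
| nspan_add: "x \<in> nspan S \<Longrightarrow> y \<in> nspan S \<Longrightarrow> x + y \<in> nspan S"

definition ZQ :: "('r::finite \<Rightarrow> 'n::finite \<Rightarrow> int) \<Rightarrow> nat \<Rightarrow> (nat \<Rightarrow> 'r \<Rightarrow> int)
                    \<Rightarrow> ((nat \<Rightarrow> int) \<times> ('r \<Rightarrow> int)) set" where
  "ZQ v r Dp = zspan (piQ ` arrows v r Dp)"

definition NQ :: "('r::finite \<Rightarrow> 'n::finite \<Rightarrow> int) \<Rightarrow> nat \<Rightarrow> (nat \<Rightarrow> 'r \<Rightarrow> int)
                    \<Rightarrow> ((nat \<Rightarrow> int) \<times> ('r \<Rightarrow> int)) set" where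
  "NQ v r Dp = nspan (piQ ` arrows v r Dp)"

definition Wt :: "nat \<Rightarrow> (nat \<Rightarrow> int) set" where
  "Wt r = {\<theta>. (\<forall>k>r. \<theta> k = 0) \<and> (\<Sum>k\<le>r. \<theta> k) = 0}"

text \<open>nu(sum theta_i chi_i) = sum theta_i [E_i] = deg(sum theta_i D_i').\<close>
definition nu :: "('r::finite \<Rightarrow> 'n::finite \<Rightarrow> int) \<Rightarrow> nat \<Rightarrow> (nat \<Rightarrow> 'r \<Rightarrow> int)
                    \<Rightarrow> (nat \<Rightarrow> int) \<Rightarrow> ('r \<Rightarrow> int) set" where
  "nu v r Dp \<theta> = deg v (\<lambda>\<rho>. \<Sum>i\<le>r. \<theta> i * Dp i \<rho>)"

definition zsmult :: "int \<Rightarrow> ('a \<Rightarrow> int) \<times> ('b \<Rightarrow> int) \<Rightarrow> ('a \<Rightarrow> int) \<times> ('b \<Rightarrow> int)" where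
  "zsmult k x = ((\<lambda>i. k * fst x i), (\<lambda>j. k * snd x j))"

definition zindep :: "(('a \<Rightarrow> int) \<times> ('b \<Rightarrow> int)) set \<Rightarrow> bool" where
  "zindep S \<longleftrightarrow> finite S \<and>
     (\<forall>c. (\<Sum>s\<in>S. zsmult (c s) s) = 0 \<longrightarrow> (\<forall>s\<in>S. c s = 0))"

definition zrank :: "(('a \<Rightarrow> int) \<times> ('b \<Rightarrow> int)) set \<Rightarrow> nat" where
  "zrank G = Max {card S | S. S \<subseteq> G \<and> zindep S}"

end

theory Submission
  imports Defs "HOL-Analysis.Convex_Euclidean_Space" "HOL-Analysis.Finite_Cartesian_Product"
begin

text \<open>Every arrow label \<open>D\<close> of an arrow \<open>i \<rightarrow> j\<close> has class \<open>[E\<^sub>j] - [E\<^sub>i]\<close>, so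
  \<open>z \<mapsto> snd z - \<Sum>\<^sub>k (fst z)\<^sub>k D\<^sub>k'\<close> maps \<open>\<int>(Q)\<close> into the image of \<open>M\<close>; this gives the
  commutative square and the inclusion of \<open>ker \<pi>\<^sub>1\<close> in \<open>M\<close>. Since \<open>\<sigma>\<close> is strongly convex,
  a separating hyperplane yields \<open>u\<^sub>0 \<in> M\<close> positive on all rays. Adding multiples of
  \<open>u\<^sub>0\<close> makes every divisor class effective and writes every \<open>u \<in> M\<close> as a difference of
  elements of \<open>\<sigma>\<^sup>\<or> \<inter> M\<close>; and every effective divisor of class \<open>[E\<^sub>j] - [E\<^sub>i]\<close> is a sum of
  labels along a path of irreducible sections. Hence \<open>M \<subseteq> \<int>(Q)\<close>, \<open>\<pi>\<^sub>1\<close> is onto \<open>Wt(Q)\<close>,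
  and \<open>\<int>(Q)\<close> has rank \<open>n + r\<close>, the rank of \<open>M \<oplus> Wt(Q)\<close>.\<close>

lemma delta_mult_sum:
  "finite A \<Longrightarrow> (\<Sum>x\<in>A. (if x = a then c else 0) * f x) = (if a \<in> A then c * f a else (0::'a::semiring_0))"
  by (simp add: if_distrib if_distribR cong: if_cong)

lemma scaled_ray_in_cone_of:
  assumes "\<rho> \<in> A" and "0 \<le> t"
  shows "(\<lambda>i. t * real_of_int (v \<rho> i)) \<in> cone_of v A"
  unfolding cone_of_def
  using assms by (intro CollectI exI[of _ "\<lambda>\<sigma>. if \<sigma> = \<rho> then t else 0"]) (simp add: delta_mult_sum)

lemma ray_in_cone_of: "\<rho> \<in> A \<Longrightarrow> (\<lambda>i. real_of_int (v \<rho> i)) \<in> cone_of v A"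
  using scaled_ray_in_cone_of[of \<rho> A 1 v] by simp

lemma zero_in_cone_of: "0 \<in> cone_of v A"
  unfolding cone_of_def by (auto simp: fun_eq_iff intro!: exI[of _ "\<lambda>_. 0"])

definition ray_vec :: "('r \<Rightarrow> 'n::finite \<Rightarrow> int) \<Rightarrow> 'r \<Rightarrow> real^'n" where
  "ray_vec v \<rho> = (\<chi> i. real_of_int (v \<rho> i))"

lemma inj_ray_vec:
  assumes rays: "\<forall>\<rho>. (\<lambda>i. real_of_int (v \<rho> i)) \<notin> cone_of v (UNIV - {\<rho>})"
  shows "inj (ray_vec v)"
proof
  fix \<rho> \<rho>' assume "ray_vec v \<rho> = ray_vec v \<rho>'"
  then have eq: "(\<lambda>i. real_of_int (v \<rho> i)) = (\<lambda>i. real_of_int (v \<rho>' i))"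
    by (simp add: ray_vec_def vec_eq_iff fun_eq_iff)
  show "\<rho> = \<rho>'"
  proof (rule ccontr)
    assume "\<rho> \<noteq> \<rho>'"
    then have "(\<lambda>i. real_of_int (v \<rho>' i)) \<in> cone_of v (UNIV - {\<rho>})"
      by (intro ray_in_cone_of) auto
    with eq show False
      using rays by metis
  qed
qed

lemma neg_scaled_ray_in_sigma:
  fixes c :: "'r::finite \<Rightarrow> real"
  assumes c0: "\<And>\<rho>. 0 \<le> c \<rho>" and balance: "\<And>i. (\<Sum>\<rho>\<in>UNIV. c \<rho> * real_of_int (v \<rho> i)) = 0"
  shows "(\<lambda>i. - (c \<rho>0 * real_of_int (v \<rho>0 i))) \<in> sigma v"
proof -
  have "(if \<rho> = \<rho>0 then 0 else c \<rho>) * a = c \<rho> * a - (if \<rho> = \<rho>0 then c \<rho>0 * a else 0)"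
    for \<rho> and a :: real
    by simp
  then have "(\<lambda>i. - (c \<rho>0 * real_of_int (v \<rho>0 i)))
      = (\<lambda>i. \<Sum>\<rho>\<in>UNIV. (if \<rho> = \<rho>0 then 0 else c \<rho>) * real_of_int (v \<rho> i))"
    by (simp add: sum_subtractf balance fun_eq_iff)
  then show ?thesis
    unfolding sigma_def cone_of_def using c0
    by (intro CollectI exI[of _ "\<lambda>\<rho>. if \<rho> = \<rho>0 then 0 else c \<rho>"]) auto
qed

lemma zero_notin_convex_hull_rays:
  fixes v :: "'r::finite \<Rightarrow> 'n::finite \<Rightarrow> int"
  assumes rays: "\<forall>\<rho>. (\<lambda>i. real_of_int (v \<rho> i)) \<notin> cone_of v (UNIV - {\<rho>})"
    and strongly_convex: "\<forall>x\<in>sigma v. - x \<in> sigma v \<longrightarrow> x = 0"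
  shows "0 \<notin> convex hull (range (ray_vec v))"
proof
  assume "0 \<in> convex hull (range (ray_vec v))"
  then obtain w where w0: "\<forall>x\<in>range (ray_vec v). 0 \<le> w x"
    and w1: "sum w (range (ray_vec v)) = 1" and ws: "(\<Sum>x\<in>range (ray_vec v). w x *\<^sub>R x) = 0"
    by (auto simp: convex_hull_finite)
  define c where "c = w \<circ> ray_vec v"
  note reindex = sum.reindex[OF inj_ray_vec[OF rays]]
  have c0: "0 \<le> c \<rho>" for \<rho>
    using w0 by (simp add: c_def)
  have "sum c UNIV = 1"
    using w1 by (simp add: c_def reindex)
  then obtain \<rho>0 where "c \<rho>0 \<noteq> 0"
    by (metis sum.neutral zero_neq_one)
  then have pos: "0 < c \<rho>0"
    using c0 by (simp add: order_less_le)
  have balance: "(\<Sum>\<rho>\<in>UNIV. c \<rho> * real_of_int (v \<rho> i)) = 0" for i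
  proof -
    have "(\<Sum>\<rho>\<in>UNIV. c \<rho> *\<^sub>R ray_vec v \<rho>) $ i = 0"
      using ws by (simp add: c_def reindex)
    then show ?thesis
      by (simp add: ray_vec_def sum_component)
  qed
  define x where "x = (\<lambda>i. c \<rho>0 * real_of_int (v \<rho>0 i))"
  have "x \<in> sigma v"
    unfolding x_def sigma_def using c0 by (intro scaled_ray_in_cone_of) auto
  moreover have "- x \<in> sigma v"
    using neg_scaled_ray_in_sigma[OF c0 balance] by (simp add: x_def fun_Compl_def)
  ultimately have "x = 0"
    using strongly_convex by blast
  then have "(\<lambda>i. real_of_int (v \<rho>0 i)) = 0"
    using pos by (simp add: x_def fun_eq_iff)
  then show False
    using rays zero_in_cone_of by metis
qed

lemma exists_int_functional_pos:
  fixes a :: "'n::finite \<Rightarrow> real" and w :: "'r::finite \<Rightarrow> 'n \<Rightarrow> int"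
  assumes "0 < b" and pos: "\<And>\<rho>. b < (\<Sum>i\<in>UNIV. a i * real_of_int (w \<rho> i))"
  shows "\<exists>u. \<forall>\<rho>. 0 < pairing u (w \<rho>)"
proof -
  define B where "B = 1 + (\<Sum>\<rho>\<in>UNIV. \<Sum>i\<in>UNIV. \<bar>real_of_int (w \<rho> i)\<bar>)"
  define N where "N = B / b"
  define u where "u i = \<lfloor>N * a i\<rfloor>" for i
  have "0 < pairing u (w \<rho>)" for \<rho>
  proof -
    have "(\<Sum>i\<in>UNIV. \<bar>real_of_int (w \<rho> i)\<bar>) \<le> (\<Sum>\<rho>\<in>UNIV. \<Sum>i\<in>UNIV. \<bar>real_of_int (w \<rho> i)\<bar>)"
      by (rule member_le_sum) (auto intro: sum_nonneg)
    then have small: "(\<Sum>i\<in>UNIV. \<bar>real_of_int (w \<rho> i)\<bar>) < B"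
      by (simp add: B_def)
    have "0 < B"
      by (simp add: B_def add_pos_nonneg sum_nonneg)
    then have "B < N * (\<Sum>i\<in>UNIV. a i * real_of_int (w \<rho> i))"
      using pos[of \<rho>] \<open>0 < b\<close> by (simp add: N_def field_simps)
    also have "\<dots> = (\<Sum>i\<in>UNIV. N * a i * real_of_int (w \<rho> i))"
      by (simp add: sum_distrib_left mult.assoc)
    also have "\<dots> \<le> (\<Sum>i\<in>UNIV. real_of_int (u i) * real_of_int (w \<rho> i) + \<bar>real_of_int (w \<rho> i)\<bar>)"
    proof (rule sum_mono)
      fix i
      have "\<bar>N * a i - real_of_int (u i)\<bar> \<le> 1"
        unfolding u_def by linarith
      then have "\<bar>(N * a i - real_of_int (u i)) * real_of_int (w \<rho> i)\<bar> \<le> \<bar>real_of_int (w \<rho> i)\<bar>"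
        by (simp add: abs_mult mult_left_le_one_le)
      then show "N * a i * real_of_int (w \<rho> i)
          \<le> real_of_int (u i) * real_of_int (w \<rho> i) + \<bar>real_of_int (w \<rho> i)\<bar>"
        by (simp add: algebra_simps abs_le_iff)
    qed
    finally have "0 < (\<Sum>i\<in>UNIV. real_of_int (u i) * real_of_int (w \<rho> i))"
      using small by (simp add: sum.distrib)
    then have "0 < real_of_int (pairing u (w \<rho>))"
      by (simp add: pairing_def)
    then show ?thesis
      by simp
  qed
  then show ?thesis
    by blast
qed

lemma exists_pairing_pos:
  fixes v :: "'r::finite \<Rightarrow> 'n::finite \<Rightarrow> int"
  assumes rays: "\<forall>\<rho>. (\<lambda>i. real_of_int (v \<rho> i)) \<notin> cone_of v (UNIV - {\<rho>})"
    and strongly_convex: "\<forall>x\<in>sigma v. - x \<in> sigma v \<longrightarrow> x = 0"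
  shows "\<exists>u. \<forall>\<rho>. 0 < pairing u (v \<rho>)"
proof -
  obtain a b where "0 < b" and sep: "\<forall>x\<in>convex hull (range (ray_vec v)). b < inner a x"
    using separating_hyperplane_closed_0[OF convex_convex_hull
        compact_imp_closed[OF finite_imp_compact_convex_hull]
        zero_notin_convex_hull_rays[OF rays strongly_convex]]
    by auto
  have "b < (\<Sum>i\<in>UNIV. a $ i * real_of_int (v \<rho> i))" for \<rho>
    using sep hull_inc[of "ray_vec v \<rho>" "range (ray_vec v)" convex]
    by (auto simp: inner_vec_def ray_vec_def)
  then show ?thesis
    by (rule exists_int_functional_pos[OF \<open>0 < b\<close>])
qed

lemma pairing_add: "pairing (a + b) w = pairing a w + pairing b w"
  by (simp add: pairing_def sum.distrib distrib_right)

lemma pairing_scale: "pairing (\<lambda>i. k * a i) w = k * pairing a w"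
  by (simp add: pairing_def sum_distrib_left mult.assoc)

lemma pairing_lincomb:
  "pairing (\<lambda>i. \<Sum>s\<in>S. c s * a s i) w = (\<Sum>s\<in>S. c s * pairing (a s) w)"
  by (simp add: pairing_def sum_distrib_left sum_distrib_right sum.swap[of _ S] mult_ac)

lemma divmap_add: "divmap v (a + b) = divmap v a + divmap v b"
  by (simp add: divmap_def fun_eq_iff pairing_add)

lemma divmap_uminus: "divmap v (- a) = - divmap v a"
  by (simp add: divmap_def pairing_def fun_eq_iff sum_negf)

lemma divmap_diff: "divmap v (a - b) = divmap v a - divmap v b"
  using divmap_add[of v a "- b"] by (simp add: divmap_uminus)

lemma divmap_zero: "divmap v 0 = 0"
  by (simp add: divmap_def pairing_def fun_eq_iff)

lemma range_divmap_add: "a \<in> range (divmap v) \<Longrightarrow> b \<in> range (divmap v) \<Longrightarrow> a + b \<in> range (divmap v)"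
  by (auto simp flip: divmap_add)

lemma range_divmap_uminus: "a \<in> range (divmap v) \<Longrightarrow> - a \<in> range (divmap v)"
  by (auto simp flip: divmap_uminus)

lemma deg_eq_iff: "deg v A = deg v B \<longleftrightarrow> A - B \<in> range (divmap v)"
proof
  assume "deg v A = deg v B"
  moreover have "A \<in> deg v A"
    unfolding deg_def by (rule range_eqI[of _ _ 0]) (simp add: divmap_zero)
  ultimately obtain u where "A = B + divmap v u"
    by (auto simp: deg_def)
  then show "A - B \<in> range (divmap v)"
    by simp
next
  assume "A - B \<in> range (divmap v)"
  then obtain w where w: "A = B + divmap v w"
    by (metis add.commute diff_add_cancel rangeE)
  have AB: "A + divmap v u = B + divmap v (w + u)" and BA: "B + divmap v u = A + divmap v (u - w)" for u
    by (simp_all add: w divmap_add divmap_diff)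
  show "deg v A = deg v B"
    unfolding deg_def
  proof
    show "range (\<lambda>u. A + divmap v u) \<subseteq> range (\<lambda>u. B + divmap v u)"
      by (auto simp: AB)
    show "range (\<lambda>u. B + divmap v u) \<subseteq> range (\<lambda>u. A + divmap v u)"
      by (auto simp: BA)
  qed
qed

lemma pairing_cone_sum:
  "(\<Sum>i\<in>UNIV. real_of_int (u i) * (\<Sum>\<rho>\<in>A. c \<rho> * real_of_int (v \<rho> i)))
   = (\<Sum>\<rho>\<in>A. c \<rho> * real_of_int (pairing u (v \<rho>)))"
  by (simp add: pairing_def sum_distrib_left sum_distrib_right sum.swap[of _ A] mult_ac)

lemma dual_cone_M_iff: "u \<in> dual_cone_M v \<longleftrightarrow> (\<forall>\<rho>. 0 \<le> pairing u (v \<rho>))"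
proof
  assume u: "u \<in> dual_cone_M v"
  show "\<forall>\<rho>. 0 \<le> pairing u (v \<rho>)"
  proof
    fix \<rho>
    have "(\<lambda>i. real_of_int (v \<rho> i)) \<in> sigma v"
      unfolding sigma_def by (rule ray_in_cone_of) simp
    then have "0 \<le> real_of_int (pairing u (v \<rho>))"
      using u by (simp add: dual_cone_M_def pairing_def)
    then show "0 \<le> pairing u (v \<rho>)"
      by simp
  qed
next
  assume nonneg: "\<forall>\<rho>. 0 \<le> pairing u (v \<rho>)"
  show "u \<in> dual_cone_M v"
    unfolding dual_cone_M_def
  proof (rule CollectI, rule ballI)
    fix x assume "x \<in> sigma v"
    then obtain c where "\<forall>\<rho>. 0 \<le> c \<rho>" and x: "x = (\<lambda>i. \<Sum>\<rho>\<in>UNIV. c \<rho> * real_of_int (v \<rho> i))"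
      by (auto simp: sigma_def cone_of_def)
    with nonneg show "0 \<le> (\<Sum>i\<in>UNIV. real_of_int (u i) * x i)"
      by (simp add: x pairing_cone_sum sum_nonneg)
  qed
qed

lemma inj_divmap:
  fixes v :: "'r::finite \<Rightarrow> 'n::finite \<Rightarrow> int"
  assumes fixed_point: "\<forall>w::'n \<Rightarrow> real. (\<forall>x\<in>sigma v. (\<Sum>i\<in>UNIV. w i * x i) = 0) \<longrightarrow> w = 0"
  shows "inj (divmap v)"
proof (rule injI)
  fix a b assume "divmap v a = divmap v b"
  then have ker: "pairing (a - b) (v \<rho>) = 0" for \<rho>
    by (metis divmap_def divmap_diff diff_self zero_fun_def)
  have "(\<lambda>i. real_of_int ((a - b) i)) = 0"
  proof (rule fixed_point[rule_format])
    fix x assume "x \<in> sigma v"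
    then obtain c where "x = (\<lambda>i. \<Sum>\<rho>\<in>UNIV. c \<rho> * real_of_int (v \<rho> i))"
      by (auto simp: sigma_def cone_of_def)
    with ker
    show "(\<Sum>i\<in>UNIV. real_of_int ((a - b) i) * x i) = 0"
      by (simp only: pairing_cone_sum) simp
  qed
  then show "a = b"
    by (simp add: fun_eq_iff)
qed

lemma pairing_scaled_ge:
  assumes u0: "\<forall>\<rho>. 0 < pairing u0 (v \<rho>)" and "0 \<le> N"
  shows "N \<le> pairing (\<lambda>i. N * u0 i) (v \<rho>)"
proof -
  have "N * 1 \<le> N * pairing u0 (v \<rho>)"
    using assms by (intro mult_left_mono) (auto simp: int_one_le_iff_zero_less)
  then show ?thesis
    by (simp add: pairing_scale)
qed

lemma dual_cone_M_difference:
  assumes u0: "\<forall>\<rho>. 0 < pairing u0 (v \<rho>)"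
  obtains a b where "a \<in> dual_cone_M v" "b \<in> dual_cone_M v" "u = a - b"
proof -
  define N where "N = (\<Sum>\<rho>\<in>UNIV. \<bar>pairing u (v \<rho>)\<bar>)"
  define b where "b = (\<lambda>i. N * u0 i)"
  have "0 \<le> N"
    by (simp add: N_def sum_nonneg)
  have bound: "\<bar>pairing u (v \<rho>)\<bar> \<le> N" for \<rho>
    unfolding N_def by (rule member_le_sum) auto
  have big: "N \<le> pairing b (v \<rho>)" for \<rho>
    unfolding b_def using u0 \<open>0 \<le> N\<close> by (rule pairing_scaled_ge)
  have "0 \<le> pairing (u + b) (v \<rho>)" "0 \<le> pairing b (v \<rho>)" for \<rho>
    using bound[of \<rho>] big[of \<rho>] \<open>0 \<le> N\<close> unfolding pairing_add abs_le_iff by linarith+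
  then show thesis
    by (intro that[of "u + b" b]) (auto simp: dual_cone_M_iff)
qed

lemma exists_effective_in_class:
  assumes u0: "\<forall>\<rho>. 0 < pairing u0 (v \<rho>)"
  shows "\<exists>u. \<forall>\<rho>. 0 \<le> D \<rho> + divmap v u \<rho>"
proof -
  define N where "N = (\<Sum>\<rho>\<in>UNIV. \<bar>D \<rho>\<bar>)"
  have "0 \<le> D \<rho> + divmap v (\<lambda>i. N * u0 i) \<rho>" for \<rho>
  proof -
    have "\<bar>D \<rho>\<bar> \<le> N"
      unfolding N_def by (rule member_le_sum) auto
    moreover have "N \<le> pairing (\<lambda>i. N * u0 i) (v \<rho>)"
      using u0 by (rule pairing_scaled_ge) (simp add: N_def sum_nonneg)
    ultimately show ?thesis
      by (simp add: divmap_def)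
  qed
  then show ?thesis
    by blast
qed

lemma sum_fun_apply: "(\<Sum>x\<in>A. f x) y = (\<Sum>x\<in>A. f x y)"
  by (induction A rule: infinite_finite_induct) auto

lemma fst_sum_zsmult: "fst (\<Sum>s\<in>S. zsmult (c s) (g s)) k = (\<Sum>s\<in>S. c s * fst (g s) k)"
  by (simp add: fst_sum sum_fun_apply zsmult_def)

lemma snd_sum_zsmult: "snd (\<Sum>s\<in>S. zsmult (c s) (g s)) k = (\<Sum>s\<in>S. c s * snd (g s) k)"
  by (simp add: snd_sum sum_fun_apply zsmult_def)

lemma zspan_zsmult:
  assumes "x \<in> zspan S"
  shows "zsmult k x \<in> zspan S"
proof -
  have nat: "zsmult (int m) x \<in> zspan S" for m
  proof (induction m)
    case 0
    then show ?case
      by (simp add: zsmult_def zspan_zero flip: zero_fun_def zero_prod_def)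
  next
    case (Suc m)
    have "zsmult (int (Suc m)) x = zsmult (int m) x + x"
      by (simp add: zsmult_def algebra_simps plus_fun_def prod_eq_iff)
    then show ?case
      using Suc assms by (simp add: zspan_add)
  qed
  show ?thesis
  proof (cases "0 \<le> k")
    case True
    then show ?thesis
      using nat[of "nat k"] by simp
  next
    case False
    then have "zsmult k x = - zsmult (int (nat (- k))) x"
      by (simp add: zsmult_def fun_eq_iff)
    then show ?thesis
      using nat zspan_neg by metis
  qed
qed

lemma zspan_sum: "finite A \<Longrightarrow> (\<And>a. a \<in> A \<Longrightarrow> f a \<in> zspan S) \<Longrightarrow> sum f A \<in> zspan S"
  by (induction A rule: finite_induct) (auto intro: zspan_zero zspan_add)

lemma nspan_subset_zspan: "nspan S \<subseteq> zspan S"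
proof
  show "x \<in> nspan S \<Longrightarrow> x \<in> zspan S" for x
    by (induction rule: nspan.induct) (auto intro: zspan.intros)
qed

lemma chi_sum: "j \<le> r \<Longrightarrow> (\<Sum>k\<le>r. chi j k * X k) = (X j :: int)"
  by (simp add: chi_def delta_mult_sum)

lemma chi_diff_sum: "i \<le> r \<Longrightarrow> j \<le> r \<Longrightarrow> (\<Sum>k\<le>r. (chi j k - chi i k) * X k) = (X j - X i :: int)"
  by (simp add: left_diff_distrib sum_subtractf chi_sum)

lemma Wt_chi_diff: "i \<le> r \<Longrightarrow> j \<le> r \<Longrightarrow> chi j - chi i \<in> Wt r"
  using chi_diff_sum[of i r j "\<lambda>_. 1"] by (auto simp: Wt_def chi_def)

lemma Wt_zero: "0 \<in> Wt r"
  by (simp add: Wt_def)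

lemma Wt_add: "\<theta> \<in> Wt r \<Longrightarrow> \<eta> \<in> Wt r \<Longrightarrow> \<theta> + \<eta> \<in> Wt r"
  by (simp add: Wt_def sum.distrib)

lemma Wt_uminus: "\<theta> \<in> Wt r \<Longrightarrow> - \<theta> \<in> Wt r"
  by (simp add: Wt_def sum_negf)

lemma Wt_expand_chi_diff:
  assumes "\<theta> \<in> Wt r"
  shows "(\<Sum>k\<in>{1..r}. \<theta> k * (chi k m - chi 0 m)) = \<theta> m"
proof (cases "m = 0")
  case True
  have "(\<Sum>k\<le>r. \<theta> k) = \<theta> 0 + (\<Sum>k\<in>{1..r}. \<theta> k)"
    by (simp add: atMost_atLeast0 sum.atLeast_Suc_atMost)
  with assms True show ?thesis
    by (simp add: Wt_def chi_def sum_negf)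
next
  case False
  have "(\<Sum>k\<in>{1..r}. \<theta> k * (chi k m - chi 0 m)) = (\<Sum>k\<in>{1..r}. if k = m then \<theta> m else 0)"
    by (rule sum.cong) (auto simp: chi_def False)
  with assms False show ?thesis
    by (auto simp: Wt_def)
qed

definition weight_divisor :: "nat \<Rightarrow> (nat \<Rightarrow> 'r \<Rightarrow> int) \<Rightarrow> (nat \<Rightarrow> int) \<Rightarrow> 'r \<Rightarrow> int" where
  "weight_divisor r Dp \<theta> = (\<lambda>\<rho>. \<Sum>k\<le>r. \<theta> k * Dp k \<rho>)"

lemma nu_eq_deg_weight_divisor: "nu v r Dp \<theta> = deg v (weight_divisor r Dp \<theta>)"
  by (simp add: nu_def weight_divisor_def)

lemma weight_divisor_add: "weight_divisor r Dp (\<theta> + \<eta>) = weight_divisor r Dp \<theta> + weight_divisor r Dp \<eta>"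
  by (simp add: weight_divisor_def fun_eq_iff distrib_right sum.distrib)

lemma weight_divisor_uminus: "weight_divisor r Dp (- \<theta>) = - weight_divisor r Dp \<theta>"
  by (simp add: weight_divisor_def fun_eq_iff sum_negf)

lemma weight_divisor_zero: "weight_divisor r Dp 0 = 0"
  by (simp add: weight_divisor_def fun_eq_iff)

lemma weight_divisor_chi_diff:
  "i \<le> r \<Longrightarrow> j \<le> r \<Longrightarrow> weight_divisor r Dp (chi j - chi i) = Dp j - Dp i"
  by (simp add: weight_divisor_def fun_eq_iff chi_diff_sum)

lemma weight_divisor_lincomb:
  "weight_divisor r Dp (\<lambda>k. \<Sum>s\<in>S. c s * \<theta> s k) \<rho> = (\<Sum>s\<in>S. c s * weight_divisor r Dp (\<theta> s) \<rho>)"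
  by (simp add: weight_divisor_def sum_distrib_left sum_distrib_right sum.swap[of _ S] mult_ac)

lemma arrowsE:
  assumes "x \<in> piQ ` arrows v r Dp"
  obtains i j D where "x = (chi j - chi i, D)" "i \<le> r" "j \<le> r" "sec v Dp i j D"
  using assms by (auto simp: arrows_def piQ_def irred_def)

lemma ZQ_memberD:
  "z \<in> ZQ v r Dp \<Longrightarrow> fst z \<in> Wt r \<and> snd z - weight_divisor r Dp (fst z) \<in> range (divmap v)"
  unfolding ZQ_def
proof (induction rule: zspan.induct)
  case zspan_zero
  have "0 \<in> range (divmap v)"
    by (metis divmap_zero rangeI)
  then show ?case
    by (simp only: fst_zero snd_zero weight_divisor_zero diff_zero Wt_zero simp_thms)
next
  case (zspan_gen x)
  then obtain i j D where x: "x = (chi j - chi i, D)" "i \<le> r" "j \<le> r" "sec v Dp i j D"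
    by (rule arrowsE)
  then have "D - (Dp j - Dp i) \<in> range (divmap v)"
    by (simp only: sec_def deg_eq_iff)
  then show ?case
    unfolding x(1) fst_conv snd_conv weight_divisor_chi_diff[OF x(2,3)]
    using Wt_chi_diff[OF x(2,3)] by blast
next
  case (zspan_add x y)
  have "snd (x + y) - weight_divisor r Dp (fst (x + y))
      = (snd x - weight_divisor r Dp (fst x)) + (snd y - weight_divisor r Dp (fst y))"
    by (simp add: weight_divisor_add)
  with zspan_add show ?case
    by (metis Wt_add fst_add range_divmap_add)
next
  case (zspan_neg x)
  have "snd (- x) - weight_divisor r Dp (fst (- x)) = - (snd x - weight_divisor r Dp (fst x))"
    by (simp add: weight_divisor_uminus)
  with zspan_neg show ?case
    by (metis Wt_uminus fst_uminus range_divmap_uminus)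
qed

lemma NQ_snd_nonneg: "z \<in> NQ v r Dp \<Longrightarrow> 0 \<le> snd z \<rho>"
  unfolding NQ_def
proof (induction rule: nspan.induct)
  case (nspan_gen x)
  then show ?case
    by (rule arrowsE) (simp add: sec_def)
qed auto

lemma NQ_subset_ZQ: "NQ v r Dp \<subseteq> ZQ v r Dp"
  unfolding NQ_def ZQ_def by (rule nspan_subset_zspan)

lemma sec_nonzero:
  assumes distinct: "\<forall>i\<le>r. \<forall>j\<le>r. i \<noteq> j \<longrightarrow> deg v (Dp i) \<noteq> deg v (Dp j)"
    and "i \<le> r" "j \<le> r" "i \<noteq> j" "sec v Dp i j D"
  shows "D \<noteq> 0"
proof
  assume "D = 0"
  with \<open>sec v Dp i j D\<close> have "deg v (Dp j - Dp i) = deg v 0"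
    by (simp add: sec_def)
  then have "Dp j - Dp i \<in> range (divmap v)"
    by (simp add: deg_eq_iff)
  then have "deg v (Dp j) = deg v (Dp i)"
    by (simp add: deg_eq_iff)
  with distinct assms(2-4) show False
    by metis
qed

lemma sum_pos_of_nonneg_nonzero:
  fixes E :: "'a::finite \<Rightarrow> 'b::ordered_comm_monoid_add"
  assumes "\<forall>x. 0 \<le> E x" and "E \<noteq> 0"
  shows "0 < sum E UNIV"
proof -
  obtain x where "E x \<noteq> 0"
    using assms(2) by (auto simp: fun_eq_iff)
  with assms(1) have "0 < E x"
    by (simp add: order_less_le)
  with assms(1) show ?thesis
    by (intro sum_pos2) auto
qed

text \<open>Every section is a product of irreducible ones; the total degree drops at each
  factorisation because the classes of the \<open>E\<^sub>i\<close> are distinct.\<close>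
lemma sec_in_NQ:
  assumes distinct: "\<forall>i\<le>r. \<forall>j\<le>r. i \<noteq> j \<longrightarrow> deg v (Dp i) \<noteq> deg v (Dp j)"
  shows "i \<le> r \<Longrightarrow> j \<le> r \<Longrightarrow> sec v Dp i j D \<Longrightarrow> (chi j - chi i, D) \<in> NQ v r Dp"
proof (induction "nat (sum D UNIV)" arbitrary: i j D rule: less_induct)
  case less
  show ?case
  proof (cases "irred v r Dp i j D")
    case True
    with less.prems have "piQ (i, j, D) \<in> piQ ` arrows v r Dp"
      by (simp add: arrows_def)
    moreover have "piQ (i, j, D) = (chi j - chi i, D)"
      by (simp add: piQ_def)
    ultimately show ?thesis
      unfolding NQ_def by (metis nspan_gen)
  next
    case False
    with less.prems obtain k D1 D2 where k: "k \<le> r" "k \<noteq> i" "k \<noteq> j"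
      and sec1: "sec v Dp i k D1" and sec2: "sec v Dp k j D2" and D: "D = D1 + D2"
      unfolding irred_def by blast
    have "0 < sum D1 UNIV" "0 < sum D2 UNIV"
      using sec_nonzero[OF distinct less.prems(1) k(1) k(2)[symmetric] sec1]
        sec_nonzero[OF distinct k(1) less.prems(2) k(3) sec2] sec1 sec2
      by (simp_all add: sec_def sum_pos_of_nonneg_nonzero)
    moreover have "sum D UNIV = sum D1 UNIV + sum D2 UNIV"
      by (simp add: D sum.distrib)
    ultimately have "(chi k - chi i, D1) \<in> NQ v r Dp" "(chi j - chi k, D2) \<in> NQ v r Dp"
      using less.hyps[OF _ less.prems(1) k(1) sec1] less.hyps[OF _ k(1) less.prems(2) sec2]
      by simp_all
    moreover have "(chi j - chi i, D) = (chi k - chi i, D1) + (chi j - chi k, D2)"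
      by (simp add: D)
    ultimately show ?thesis
      unfolding NQ_def by (metis nspan_add)
  qed
qed

lemma exists_sec:
  assumes u0: "\<forall>\<rho>. 0 < pairing u0 (v \<rho>)"
  shows "\<exists>D. sec v Dp i j D"
proof -
  obtain u where "\<forall>\<rho>. 0 \<le> (Dp j - Dp i) \<rho> + divmap v u \<rho>"
    using exists_effective_in_class[OF u0] by blast
  moreover have "deg v (Dp j - Dp i + divmap v u) = deg v (Dp j - Dp i)"
    by (simp add: deg_eq_iff)
  ultimately have "sec v Dp i j (Dp j - Dp i + divmap v u)"
    by (simp add: sec_def)
  then show ?thesis
    by blast
qed

lemma exists_chi_diff_in_NQ:
  assumes u0: "\<forall>\<rho>. 0 < pairing u0 (v \<rho>)"
    and distinct: "\<forall>i\<le>r. \<forall>j\<le>r. i \<noteq> j \<longrightarrow> deg v (Dp i) \<noteq> deg v (Dp j)"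
    and "i \<le> r" "j \<le> r"
  shows "\<exists>D. (chi j - chi i, D) \<in> NQ v r Dp"
  using exists_sec[OF u0] sec_in_NQ[OF distinct assms(3,4)] by blast

lemma dual_cone_M_in_NQ:
  assumes distinct: "\<forall>i\<le>r. \<forall>j\<le>r. i \<noteq> j \<longrightarrow> deg v (Dp i) \<noteq> deg v (Dp j)"
    and "u \<in> dual_cone_M v"
  shows "(0, divmap v u) \<in> NQ v r Dp"
proof -
  have "deg v (divmap v u) = deg v (Dp 0 - Dp 0)"
    by (simp add: deg_eq_iff)
  with assms(2) have "sec v Dp 0 0 (divmap v u)"
    by (simp add: sec_def dual_cone_M_iff divmap_def)
  from sec_in_NQ[OF distinct _ _ this] show ?thesis
    by simp
qed

lemma divmap_in_ZQ:
  assumes u0: "\<forall>\<rho>. 0 < pairing u0 (v \<rho>)"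
    and distinct: "\<forall>i\<le>r. \<forall>j\<le>r. i \<noteq> j \<longrightarrow> deg v (Dp i) \<noteq> deg v (Dp j)"
  shows "(0, divmap v u) \<in> ZQ v r Dp"
proof -
  obtain a b where ab: "a \<in> dual_cone_M v" "b \<in> dual_cone_M v" and u: "u = a - b"
    using dual_cone_M_difference[OF u0] .
  then have "(0, divmap v a) \<in> ZQ v r Dp" "(0, divmap v b) \<in> ZQ v r Dp"
    using dual_cone_M_in_NQ[OF distinct] NQ_subset_ZQ by blast+
  then have "(0, divmap v a) + - (0, divmap v b) \<in> ZQ v r Dp"
    unfolding ZQ_def by (intro zspan_add zspan_neg)
  then show ?thesis
    by (simp add: u divmap_diff)
qed

lemma ZQ_fst_zero:
  assumes u0: "\<forall>\<rho>. 0 < pairing u0 (v \<rho>)"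
    and distinct: "\<forall>i\<le>r. \<forall>j\<le>r. i \<noteq> j \<longrightarrow> deg v (Dp i) \<noteq> deg v (Dp j)"
  shows "{z \<in> ZQ v r Dp. fst z = 0} = range (\<lambda>u. (0, divmap v u))"
proof
  show "{z \<in> ZQ v r Dp. fst z = 0} \<subseteq> range (\<lambda>u. (0, divmap v u))"
  proof clarify
    fix z assume "z \<in> ZQ v r Dp" "fst z = 0"
    then have "snd z \<in> range (divmap v)"
      using ZQ_memberD[of z v r Dp] by (simp add: weight_divisor_zero)
    with \<open>fst z = 0\<close> show "z \<in> range (\<lambda>u. (0, divmap v u))"
      by (metis (no_types, lifting) prod.collapse rangeE rangeI)
  qed
  show "range (\<lambda>u. (0, divmap v u)) \<subseteq> {z \<in> ZQ v r Dp. fst z = 0}"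
    using divmap_in_ZQ[OF u0 distinct] by auto
qed

lemma fst_ZQ:
  assumes u0: "\<forall>\<rho>. 0 < pairing u0 (v \<rho>)"
    and distinct: "\<forall>i\<le>r. \<forall>j\<le>r. i \<noteq> j \<longrightarrow> deg v (Dp i) \<noteq> deg v (Dp j)"
  shows "fst ` ZQ v r Dp = Wt r"
proof
  show "fst ` ZQ v r Dp \<subseteq> Wt r"
    using ZQ_memberD by blast
  show "Wt r \<subseteq> fst ` ZQ v r Dp"
  proof
    fix \<theta> assume \<theta>: "\<theta> \<in> Wt r"
    have "\<exists>E. (chi k - chi 0, E) \<in> ZQ v r Dp" if "k \<le> r" for k
      using exists_chi_diff_in_NQ[OF u0 distinct _ that] NQ_subset_ZQ by blast
    then obtain E where E: "\<And>k. k \<le> r \<Longrightarrow> (chi k - chi 0, E k) \<in> ZQ v r Dp"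
      by metis
    define z where "z = (\<Sum>k\<in>{1..r}. zsmult (\<theta> k) (chi k - chi 0, E k))"
    have "z \<in> ZQ v r Dp"
      unfolding z_def using E unfolding ZQ_def by (intro zspan_sum zspan_zsmult) auto
    moreover have "fst z = \<theta>"
      using Wt_expand_chi_diff[OF \<theta>] by (simp add: z_def fst_sum_zsmult fun_eq_iff)
    ultimately show "\<theta> \<in> fst ` ZQ v r Dp"
      by force
  qed
qed

lemma deg_snd_ZQ: "z \<in> ZQ v r Dp \<Longrightarrow> deg v (snd z) = nu v r Dp (fst z)"
  using ZQ_memberD[of z v r Dp] by (simp add: nu_eq_deg_weight_divisor deg_eq_iff)

lemma divmap_dual_cone_M: "divmap v ` dual_cone_M v = {D. (\<forall>\<rho>. 0 \<le> D \<rho>) \<and> deg v D = deg v 0}"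
  by (auto simp: deg_eq_iff dual_cone_M_iff divmap_def)

lemma NQ_fst_zero:
  assumes distinct: "\<forall>i\<le>r. \<forall>j\<le>r. i \<noteq> j \<longrightarrow> deg v (Dp i) \<noteq> deg v (Dp j)"
  shows "snd ` {z \<in> NQ v r Dp. fst z = 0} = divmap v ` dual_cone_M v"
proof
  show "snd ` {z \<in> NQ v r Dp. fst z = 0} \<subseteq> divmap v ` dual_cone_M v"
  proof clarify
    fix z assume z: "z \<in> NQ v r Dp" "fst z = 0"
    then have "snd z \<in> range (divmap v)"
      using ZQ_memberD[of z v r Dp] NQ_subset_ZQ[of v r Dp] by (auto simp: weight_divisor_zero)
    moreover have "\<forall>\<rho>. 0 \<le> snd z \<rho>"
      using NQ_snd_nonneg[OF z(1)] by blast
    ultimately show "snd z \<in> divmap v ` dual_cone_M v"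
      by (auto simp: divmap_dual_cone_M deg_eq_iff)
  qed
  show "divmap v ` dual_cone_M v \<subseteq> snd ` {z \<in> NQ v r Dp. fst z = 0}"
    using dual_cone_M_in_NQ[OF distinct] by force
qed

text \<open>One step of fraction-free Gaussian elimination, with pivot \<open>f i0 k0\<close>.\<close>
lemma int_relation_from_eliminated:
  fixes f :: "'i \<Rightarrow> 'k \<Rightarrow> int"
  assumes "finite I" "i0 \<in> I" "f i0 k0 \<noteq> 0"
    and rel: "\<And>m. (\<Sum>i\<in>I - {i0}. c i * (f i0 k0 * f i m - f i k0 * f i0 m)) = 0"
    and "i1 \<in> I - {i0}" "c i1 \<noteq> 0"
  shows "\<exists>d. (\<forall>m. (\<Sum>i\<in>I. d i * f i m) = 0) \<and> (\<exists>i\<in>I. d i \<noteq> 0)"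
proof -
  define d where "d i = (if i = i0 then - (\<Sum>j\<in>I - {i0}. c j * f j k0) else c i * f i0 k0)" for i
  have "(\<Sum>i\<in>I. d i * f i m) = 0" for m
  proof -
    have "(\<Sum>i\<in>I. d i * f i m) = d i0 * f i0 m + (\<Sum>i\<in>I - {i0}. d i * f i m)"
      using assms(1,2) by (simp add: sum.remove)
    also have "\<dots> = (\<Sum>i\<in>I - {i0}. c i * (f i0 k0 * f i m - f i k0 * f i0 m))"
      by (simp add: d_def sum_distrib_left sum_distrib_right sum_subtractf algebra_simps)
    finally show ?thesis
      using rel by simp
  qed
  moreover have "d i1 \<noteq> 0"
    using assms(3,5,6) by (simp add: d_def)
  ultimately show ?thesis
    using assms(5) by blast
qed

lemma exists_int_linear_relation:
  fixes f :: "'i \<Rightarrow> 'k \<Rightarrow> int"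
  assumes "finite K" "finite I" "card K < card I" "\<forall>i\<in>I. \<forall>k. k \<notin> K \<longrightarrow> f i k = 0"
  shows "\<exists>c. (\<forall>k. (\<Sum>i\<in>I. c i * f i k) = 0) \<and> (\<exists>i\<in>I. c i \<noteq> 0)"
  using assms
proof (induction K arbitrary: I f rule: finite_induct)
  case empty
  then obtain i where "i \<in> I"
    by fastforce
  with empty show ?case
    by (intro exI[of _ "\<lambda>_. 1"]) auto
next
  case (insert k0 K)
  show ?case
  proof (cases "\<forall>i\<in>I. f i k0 = 0")
    case True
    with insert show ?thesis
      by (intro insert.IH) (auto, metis)
  next
    case False
    then obtain i0 where i0: "i0 \<in> I" "f i0 k0 \<noteq> 0"
      by blast
    define g where "g i m = f i0 k0 * f i m - f i k0 * f i0 m" for i m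
    have "card K < card (I - {i0})"
      using insert.hyps insert.prems i0 by simp
    moreover have "g i m = 0" if "i \<in> I - {i0}" "m \<notin> K" for i m
      using insert.prems(3) that i0(1) by (cases "m = k0") (auto simp: g_def)
    ultimately have "\<exists>c. (\<forall>m. (\<Sum>i\<in>I - {i0}. c i * g i m) = 0) \<and> (\<exists>i\<in>I - {i0}. c i \<noteq> 0)"
      using insert.prems(1) by (intro insert.IH) auto
    then obtain c i1 where "\<forall>m. (\<Sum>i\<in>I - {i0}. c i * g i m) = 0" "i1 \<in> I - {i0}" "c i1 \<noteq> 0"
      by blast
    with i0 insert.prems(1) show ?thesis
      by (intro int_relation_from_eliminated[of I i0 f k0 c i1]) (auto simp: g_def)
  qed
qed

lemma zindep_image:
  fixes g :: "'i \<Rightarrow> ('a \<Rightarrow> int) \<times> ('b \<Rightarrow> int)"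
  assumes "finite I" and indep: "\<And>c. (\<Sum>i\<in>I. zsmult (c i) (g i)) = 0 \<Longrightarrow> \<forall>i\<in>I. c i = 0"
  shows "zindep (g ` I)" and "card (g ` I) = card I"
proof -
  have inj: "inj_on g I"
  proof
    fix a b assume ab: "a \<in> I" "b \<in> I" "g a = g b"
    show "a = b"
    proof (rule ccontr)
      assume "a \<noteq> b"
      define c :: "'i \<Rightarrow> int" where "c i = (if i = a then 1 else if i = b then -1 else 0)" for i
      have "zsmult (c i) (g i) = (if i = a then g a else 0) - (if i = b then g b else 0)" for i
        using \<open>a \<noteq> b\<close> by (simp add: c_def zsmult_def prod_eq_iff fun_eq_iff)
      then have "(\<Sum>i\<in>I. zsmult (c i) (g i)) = 0"
        using ab \<open>finite I\<close> by (simp only: sum_subtractf sum.delta) simp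
      with indep ab(1) show False
        by (force simp: c_def)
    qed
  qed
  then show "card (g ` I) = card I"
    by (rule card_image)
  show "zindep (g ` I)"
    unfolding zindep_def
  proof (intro conjI allI impI ballI)
    show "finite (g ` I)"
      using \<open>finite I\<close> by simp
    fix c x assume "(\<Sum>s\<in>g ` I. zsmult (c s) s) = 0" "x \<in> g ` I"
    then show "c x = 0"
      using indep[of "c \<circ> g"] by (auto simp: sum.reindex[OF inj])
  qed
qed

lemma zrank_eqI:
  assumes "\<And>S. S \<subseteq> G \<Longrightarrow> zindep S \<Longrightarrow> card S \<le> n"
    and "S \<subseteq> G" "zindep S" "card S = n"
  shows "zrank G = n"
proof -
  let ?ranks = "{card S | S. S \<subseteq> G \<and> zindep S}"
  have bounded: "\<forall>k\<in>?ranks. k \<le> n"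
    using assms(1) by blast
  then have "finite ?ranks"
    by (meson finite_atMost finite_subset atMost_iff subsetI)
  moreover have "n \<in> ?ranks"
    using assms(2-4) by blast
  ultimately show ?thesis
    unfolding zrank_def using bounded by (intro Max_eqI) auto
qed

lemma divmap_lincomb:
  "divmap v (\<lambda>i. \<Sum>s\<in>S. c s * a s i) \<rho> = (\<Sum>s\<in>S. c s * divmap v (a s) \<rho>)"
  by (simp add: divmap_def pairing_lincomb)

text \<open>An element \<open>z = (\<theta>, \<Sum>\<^sub>k \<theta>\<^sub>k D\<^sub>k' + divmap v u)\<close> of \<open>\<int>(Q)\<close> depends linearly on its
  \<open>r + n\<close> coordinates \<open>\<theta>\<^sub>1, \<dots>, \<theta>\<^sub>r, u\<close>, since \<open>\<theta>\<^sub>0 = - \<Sum>\<^sub>k\<^sub>\<ge>\<^sub>1 \<theta>\<^sub>k\<close>.\<close>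
definition ZQ_coords :: "('r::finite \<Rightarrow> 'n::finite \<Rightarrow> int) \<Rightarrow> nat \<Rightarrow> (nat \<Rightarrow> 'r \<Rightarrow> int)
    \<Rightarrow> (nat \<Rightarrow> int) \<times> ('r \<Rightarrow> int) \<Rightarrow> nat + 'n \<Rightarrow> int" where
  "ZQ_coords v r Dp z = case_sum (\<lambda>k. if k \<in> {1..r} then fst z k else 0)
     (the_inv (divmap v) (snd z - weight_divisor r Dp (fst z)))"

lemma ZQ_coords_lincomb_zero:
  fixes v :: "'r::finite \<Rightarrow> 'n::finite \<Rightarrow> int"
  assumes injd: "inj (divmap v)" and S: "finite S" "S \<subseteq> ZQ v r Dp"
    and rel: "\<And>m. (\<Sum>s\<in>S. c s * ZQ_coords v r Dp s m) = 0"
  shows "(\<Sum>s\<in>S. zsmult (c s) s) = 0"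
proof -
  define U where "U z = the_inv (divmap v) (snd z - weight_divisor r Dp (fst z))" for z
  have U: "divmap v (U z) = snd z - weight_divisor r Dp (fst z)" if "z \<in> ZQ v r Dp" for z
    unfolding U_def using ZQ_memberD[OF that] injd by (auto simp: the_inv_f_f)
  define z where "z = (\<Sum>s\<in>S. zsmult (c s) s)"
  have "z \<in> ZQ v r Dp"
    unfolding z_def using S unfolding ZQ_def by (intro zspan_sum zspan_zsmult) auto
  have fst_z_lincomb: "fst z = (\<lambda>k. \<Sum>s\<in>S. c s * fst s k)"
    by (simp add: z_def fst_sum_zsmult fun_eq_iff)
  have fst_z: "fst z = 0"
  proof
    fix m
    have "fst z k = 0" if "k \<in> {1..r}" for k
      using rel[of "Inl k"] that by (simp add: fst_z_lincomb ZQ_coords_def)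
    then show "fst z m = 0 m"
      using Wt_expand_chi_diff[of "fst z" r m] ZQ_memberD[OF \<open>z \<in> ZQ v r Dp\<close>] by simp
  qed
  have "snd z = 0"
  proof
    fix \<rho>
    have "snd z \<rho> = (\<Sum>s\<in>S. c s * (divmap v (U s) \<rho> + weight_divisor r Dp (fst s) \<rho>))"
      using U S(2) by (auto simp: z_def snd_sum_zsmult intro!: sum.cong)
    also have "\<dots> = divmap v (\<lambda>i. \<Sum>s\<in>S. c s * U s i) \<rho> + weight_divisor r Dp (fst z) \<rho>"
      by (simp add: divmap_lincomb fst_z_lincomb weight_divisor_lincomb distrib_left sum.distrib)
    also have "(\<lambda>i. \<Sum>s\<in>S. c s * U s i) = 0"
      using rel[of "Inr _"] by (simp add: ZQ_coords_def U_def fun_eq_iff)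
    finally show "snd z \<rho> = 0 \<rho>"
      by (simp add: fst_z divmap_def pairing_def weight_divisor_def)
  qed
  with fst_z show ?thesis
    by (simp add: z_def prod_eq_iff)
qed

lemma card_zindep_ZQ_le:
  fixes v :: "'r::finite \<Rightarrow> 'n::finite \<Rightarrow> int"
  assumes injd: "inj (divmap v)" and S: "S \<subseteq> ZQ v r Dp" "zindep S"
  shows "card S \<le> CARD('n) + r"
proof (rule ccontr)
  assume big: "\<not> ?thesis"
  have "finite S"
    using S(2) by (simp add: zindep_def)
  moreover have "card ({1..r} <+> (UNIV :: 'n set)) < card S"
    using big by (simp add: card_Plus)
  moreover have "\<forall>s\<in>S. \<forall>m. m \<notin> {1..r} <+> UNIV \<longrightarrow> ZQ_coords v r Dp s m = 0"
    by (auto simp: ZQ_coords_def split: sum.split)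
  ultimately obtain c where "\<And>m. (\<Sum>s\<in>S. c s * ZQ_coords v r Dp s m) = 0" "\<exists>s\<in>S. c s \<noteq> 0"
    using exists_int_linear_relation[of "{1..r} <+> UNIV" S "ZQ_coords v r Dp"] by auto
  with ZQ_coords_lincomb_zero[OF injd \<open>finite S\<close> S(1)] S(2) show False
    by (simp add: zindep_def)
qed

lemma exists_zindep_ZQ:
  fixes v :: "'r::finite \<Rightarrow> 'n::finite \<Rightarrow> int"
  assumes injd: "inj (divmap v)" and E: "\<And>k. k \<le> r \<Longrightarrow> (chi k - chi 0, E k) \<in> ZQ v r Dp"
    and M: "\<And>u. (0, divmap v u) \<in> ZQ v r Dp"
  shows "\<exists>S. S \<subseteq> ZQ v r Dp \<and> zindep S \<and> card S = CARD('n) + r"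
proof -
  define e :: "'n \<Rightarrow> 'n \<Rightarrow> int" where "e i = (\<lambda>j. if j = i then 1 else 0)" for i
  define g where "g = case_sum (\<lambda>k. (chi k - chi 0, E k)) (\<lambda>i. (0 :: nat \<Rightarrow> int, divmap v (e i)))"
  define I where "I = {1..r} <+> (UNIV :: 'n set)"
  have divmap_e: "divmap v (e i) \<rho> = v \<rho> i" for i \<rho>
    by (simp add: divmap_def pairing_def e_def delta_mult_sum)
  have indep: "\<forall>x\<in>I. c x = 0" if rel: "(\<Sum>x\<in>I. zsmult (c x) (g x)) = 0" for c
  proof -
    have fst_rel: "(\<Sum>k\<in>{1..r}. c (Inl k) * (chi k m - chi 0 m)) = 0" for m
      using arg_cong[OF rel, of "\<lambda>z. fst z m"] by (simp add: I_def g_def fst_sum_zsmult sum.Plus)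
    have lattice_part: "c (Inl k) = 0" if "k \<in> {1..r}" for k
    proof -
      have "(\<Sum>j\<in>{1..r}. c (Inl j) * (chi j k - chi 0 k)) = (\<Sum>j\<in>{1..r}. if j = k then c (Inl k) else 0)"
        using that by (intro sum.cong) (auto simp: chi_def)
      with fst_rel[of k] that show ?thesis
        by simp
    qed
    have "(\<Sum>i\<in>UNIV. c (Inr i) * v \<rho> i) = 0" for \<rho>
      using arg_cong[OF rel, of "\<lambda>z. snd z \<rho>"] lattice_part
      by (simp add: I_def g_def snd_sum_zsmult sum.Plus divmap_e)
    then have "divmap v (\<lambda>i. c (Inr i)) \<rho> = 0" for \<rho>
      by (simp add: divmap_def pairing_def)
    then have "divmap v (\<lambda>i. c (Inr i)) = divmap v 0"
      by (simp add: divmap_zero fun_eq_iff)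
    then have "(\<lambda>i. c (Inr i)) = 0"
      by (rule injD[OF injd])
    with lattice_part show ?thesis
      by (auto simp: I_def fun_eq_iff)
  qed
  have "g ` I \<subseteq> ZQ v r Dp"
    using E M by (auto simp: I_def g_def)
  moreover have "finite I"
    by (simp add: I_def)
  ultimately show ?thesis
    using zindep_image[of I g] indep by (auto simp: I_def card_Plus)
qed

lemma zrank_ZQ:
  fixes v :: "'r::finite \<Rightarrow> 'n::finite \<Rightarrow> int"
  assumes u0: "\<forall>\<rho>. 0 < pairing u0 (v \<rho>)" and injd: "inj (divmap v)"
    and distinct: "\<forall>i\<le>r. \<forall>j\<le>r. i \<noteq> j \<longrightarrow> deg v (Dp i) \<noteq> deg v (Dp j)"
  shows "zrank (ZQ v r Dp) = CARD('n) + r"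
proof -
  have "\<exists>E. (chi k - chi 0, E) \<in> ZQ v r Dp" if "k \<le> r" for k
    using exists_chi_diff_in_NQ[OF u0 distinct _ that] NQ_subset_ZQ by blast
  then obtain E where "\<And>k. k \<le> r \<Longrightarrow> (chi k - chi 0, E k) \<in> ZQ v r Dp"
    by metis
  from exists_zindep_ZQ[OF injd this divmap_in_ZQ[OF u0 distinct]]
  obtain S where "S \<subseteq> ZQ v r Dp" "zindep S" "card S = CARD('n) + r"
    by blast
  with card_zindep_ZQ_le[OF injd] show ?thesis
    by (intro zrank_eqI) auto
qed

theorem lemma2p8:
  fixes v :: "'r::finite \<Rightarrow> 'n::finite \<Rightarrow> int"
    and r :: nat
    and Dp :: "nat \<Rightarrow> 'r \<Rightarrow> int"
  assumes prim: "\<forall>\<rho>. primitive (v \<rho>)"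
    and rays: "\<forall>\<rho>. (\<lambda>i. real_of_int (v \<rho> i)) \<notin> cone_of v (UNIV - {\<rho>})"
    and strongly_convex: "\<forall>x\<in>sigma v. - x \<in> sigma v \<longrightarrow> x = 0"
    and fixed_point: "\<forall>w::'n \<Rightarrow> real. (\<forall>x\<in>sigma v. (\<Sum>i\<in>UNIV. w i * x i) = 0) \<longrightarrow> w = 0"
    and E0: "deg v (Dp 0) = deg v 0"
    and distinct: "\<forall>i\<le>r. \<forall>j\<le>r. i \<noteq> j \<longrightarrow> deg v (Dp i) \<noteq> deg v (Dp j)"
  shows
    "(\<forall>u. (0, divmap v u) \<in> ZQ v r Dp)
     \<and> inj (\<lambda>u. (0::nat \<Rightarrow> int, divmap v u))
     \<and> {z \<in> ZQ v r Dp. fst z = 0} = range (\<lambda>u. (0, divmap v u))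
     \<and> fst ` ZQ v r Dp = Wt r
     \<and> bij_betw snd {z \<in> ZQ v r Dp. fst z = 0} (range (divmap v))
     \<and> (\<forall>z\<in>ZQ v r Dp. deg v (snd z) = nu v r Dp (fst z))
     \<and> inj (divmap v)
     \<and> {D. deg v D = deg v 0} = range (divmap v)
     \<and> range (deg v) = Cl v
     \<and> bij_betw snd {z \<in> NQ v r Dp. fst z = 0} (divmap v ` dual_cone_M v)
     \<and> divmap v ` dual_cone_M v = {D. (\<forall>\<rho>. 0 \<le> D \<rho>) \<and> deg v D = deg v 0}
     \<and> zrank (ZQ v r Dp) = card (UNIV :: 'n set) + r"
proof -
  obtain u0 where u0: "\<forall>\<rho>. 0 < pairing u0 (v \<rho>)"
    using exists_pairing_pos[OF rays strongly_convex] by blast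
  have injd: "inj (divmap v)"
    using fixed_point by (rule inj_divmap)
  have ZQ_ker: "{z \<in> ZQ v r Dp. fst z = 0} = range (\<lambda>u. (0, divmap v u))"
    by (rule ZQ_fst_zero[OF u0 distinct])
  have inj_on_snd: "inj_on snd {z \<in> A. fst z = 0}" for A :: "((nat \<Rightarrow> int) \<times> ('r \<Rightarrow> int)) set"
    by (rule inj_onI) (simp add: prod_eq_iff)
  have "bij_betw snd {z \<in> ZQ v r Dp. fst z = 0} (range (divmap v))"
    unfolding bij_betw_def using inj_on_snd[of "ZQ v r Dp"] by (simp add: ZQ_ker image_image)
  moreover have "bij_betw snd {z \<in> NQ v r Dp. fst z = 0} (divmap v ` dual_cone_M v)"
    unfolding bij_betw_def using inj_on_snd NQ_fst_zero[OF distinct] by blast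
  moreover have "inj (\<lambda>u. (0::nat \<Rightarrow> int, divmap v u))"
    using injd by (simp add: inj_def)
  moreover have "{D. deg v D = deg v 0} = range (divmap v)"
    by (simp add: deg_eq_iff)
  moreover have "\<forall>u. (0, divmap v u) \<in> ZQ v r Dp"
    using divmap_in_ZQ[OF u0 distinct] by blast
  moreover have "\<forall>z\<in>ZQ v r Dp. deg v (snd z) = nu v r Dp (fst z)"
    using deg_snd_ZQ by blast
  ultimately show ?thesis
    using ZQ_ker fst_ZQ[OF u0 distinct] injd divmap_dual_cone_M zrank_ZQ[OF u0 injd distinct]
    unfolding Cl_def by (intro conjI) (assumption | rule refl)+
qed

end
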